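(* Let $f$ be a non-trivial constraint and let $P$ be a multilinear polynomial over $\mathbb{Q}$ in $\ell$ variables of degree $d$ with $0\le d\le\deg(f)$. Then there exist $M$, constraints $f_1,\dots,f_M$ each expressible by $f$ with constants, index tuples $(j_i^1,\dots,j_i^{\mathrm{ar}(f_i)})$ with entries in $[\ell]$, and rationals $\alpha_1,\dots,\alpha_M\in\mathbb{Q}$ such that the polynomial identity $$P(x_1,\dots,x_\ell)=\sum_{i=1}^M\alpha_i\cdot P_{f_i}(x_{j_i^1},\dots,x_{j_i^{\mathrm{ar}(f_i)}})$$ holds.
   Context: A $k$-ary constraint is $f\colon\{0,1\}^k\to\{0,1\}$ ($k=\mathrm{ar}(f)$), trivial if it is constant. Its characteristic polynomial $P_f$ is the unique multilinear polynomial over $\mathbb{R}$ in $k$ variables with $P_f(x)=f(x)$ for all $x\in\{0,1\}^k$; $\deg(f)=\deg(P_f)$. A $d$-ary constraint $g$ is expressible by $f$ with constants if $g(x_1,\dots,x_d)=f(\xi_1,\dots,\xi_k)$ identically, where each $\xi_j$ is either a variable $x_i$ for some $i\in[d]$ or one of the constants $0,1$. *)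

theory Defs
  imports Complex_Main
begin

text \<open>A multilinear polynomial over the rationals in the variables x_0, x_1, ... is
  represented by its coefficient function: the coefficient of the monomial
  prod_{i in S} x_i is c S.\<close>
type_synonym mlpoly = "nat set \<Rightarrow> rat"

definition ml_poly :: "nat \<Rightarrow> mlpoly \<Rightarrow> bool" where
  "ml_poly n c \<longleftrightarrow> (\<forall>S. c S \<noteq> 0 \<longrightarrow> S \<subseteq> {..<n})"

definition ml_eval :: "nat \<Rightarrow> mlpoly \<Rightarrow> (nat \<Rightarrow> rat) \<Rightarrow> rat" where
  "ml_eval n c x = (\<Sum>S\<in>Pow {..<n}. c S * (\<Prod>i\<in>S. x i))"

text \<open>Degree (the zero polynomial gets degree 0).\<close>
definition ml_deg :: "mlpoly \<Rightarrow> nat" where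
  "ml_deg c = Max (insert 0 {card S | S. c S \<noteq> 0})"

definition bool01 :: "bool \<Rightarrow> rat" where
  "bool01 b = (if b then 1 else 0)"

definition nontrivial :: "nat \<Rightarrow> (bool list \<Rightarrow> bool) \<Rightarrow> bool" where
  "nontrivial k f \<longleftrightarrow> (\<exists>xs ys. length xs = k \<and> length ys = k \<and> f xs \<noteq> f ys)"

definition char_poly :: "nat \<Rightarrow> (bool list \<Rightarrow> bool) \<Rightarrow> mlpoly" where
  "char_poly k f = (THE c. ml_poly k c \<and>
     (\<forall>xs. length xs = k \<longrightarrow> ml_eval k c (\<lambda>i. bool01 (xs ! i)) = bool01 (f xs)))"

definition cdeg :: "nat \<Rightarrow> (bool list \<Rightarrow> bool) \<Rightarrow> nat" where
  "cdeg k f = ml_deg (char_poly k f)"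

text \<open>The d-ary constraint g is expressible by the k-ary constraint f with constants:
  each argument position j < k of f is fed either a variable x_i (Inl i, i < d)
  or a constant (Inr b).\<close>
definition expressible :: "nat \<Rightarrow> (bool list \<Rightarrow> bool) \<Rightarrow> nat \<Rightarrow> (bool list \<Rightarrow> bool) \<Rightarrow> bool" where
  "expressible d g k f \<longleftrightarrow>
     (\<exists>\<xi> :: nat \<Rightarrow> nat + bool.
        (\<forall>j<k. \<forall>i. \<xi> j = Inl i \<longrightarrow> i < d) \<and>
        (\<forall>xs. length xs = d \<longrightarrow>
           g xs = f (map (\<lambda>j. case \<xi> j of Inl i \<Rightarrow> xs ! i | Inr b \<Rightarrow> b) [0..<k])))"

end

theory Submission
  imports Defs
begin

text \<open>
  The rational linear combinations of the polynomials P_g(x_j1, ..., x_ja), g expressible by f,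
  form a vector space, so it suffices to show that it contains every monomial x_S with
  card S at most deg f; we induct on card S.  Fixing arguments of f corresponds to substituting
  constants into P_f, by uniqueness of multilinear interpolation on the Boolean cube.  Pick a
  monomial x_T of P_f with nonzero coefficient and card T = deg f, and T' in T with
  card T' = card S.  Setting the variables outside T to 0 and taking the finite difference in the
  variables of T - T' is a signed sum of such restrictions; it leaves a polynomial in the
  variables of T' whose coefficient of x_T' is that of x_T.  Renaming T' bijectively to S gives a
  nonzero multiple of x_S plus monomials of smaller degree, which lie in the span by induction.
\<close>

lemma bool01_simps [simp]: "bool01 True = 1" "bool01 False = 0"
  by (simp_all add: bool01_def)

lemma sum_Pow_insert:
  assumes "finite A" "t \<notin> A"
  shows "(\<Sum>S\<in>Pow (insert t A). F S) = (\<Sum>S\<in>Pow A. F S + F (insert t S))"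
proof -
  have "inj_on (insert t) (Pow A)"
    using assms(2) by (auto simp: inj_on_def)
  then show ?thesis
    using assms unfolding Pow_insert
    by (subst sum.union_disjoint) (auto simp: sum.reindex sum.distrib)
qed

lemma prod_fun_upd_notin: "t \<notin> W \<Longrightarrow> (\<Prod>i\<in>W. (x(t := v)) i) = (\<Prod>i\<in>W. x i)"
  by (rule prod.cong) auto

lemma finite_same_card_bij_into:
  assumes "finite A" "finite B" "card A = card B" "B \<noteq> {}"
  obtains \<pi> where "bij_betw \<pi> A B" "\<And>j. \<pi> j \<in> B"
proof -
  obtain \<pi> where \<pi>: "bij_betw \<pi> A B"
    using finite_same_card_bij[OF assms(1-3)] by blast
  obtain b where "b \<in> B"
    using assms(4) by blast
  have "bij_betw (\<lambda>j. if j \<in> A then \<pi> j else b) A B"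
    using \<pi> by (rule bij_betw_cong[THEN iffD1, rotated]) simp
  moreover have "(if j \<in> A then \<pi> j else b) \<in> B" for j
    using \<pi> \<open>b \<in> B\<close> by (auto dest: bij_betwE)
  ultimately show ?thesis
    using that by blast
qed

subsection \<open>Multilinear polynomials\<close>

lemma ml_eval_cong: "(\<And>i. i < n \<Longrightarrow> x i = y i) \<Longrightarrow> ml_eval n c x = ml_eval n c y"
  unfolding ml_eval_def by (intro sum.cong refl arg_cong2[where f = "(*)"] prod.cong) auto

lemma ml_eval_diff: "ml_eval n (\<lambda>S. c S - d S) x = ml_eval n c x - ml_eval n d x"
  by (simp add: ml_eval_def sum_subtractf left_diff_distrib)

lemma ml_eval_split_var:
  assumes "t < n"
  shows "ml_eval n c x = (\<Sum>S\<in>Pow ({..<n} - {t}). (c S + x t * c (insert t S)) * (\<Prod>i\<in>S. x i))"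
proof -
  have "ml_eval n c x = (\<Sum>S\<in>Pow (insert t ({..<n} - {t})). c S * (\<Prod>i\<in>S. x i))"
    using assms by (simp add: ml_eval_def insert_absorb)
  also have "\<dots> =
      (\<Sum>S\<in>Pow ({..<n} - {t}). c S * (\<Prod>i\<in>S. x i) + c (insert t S) * (\<Prod>i\<in>insert t S. x i))"
    by (rule sum_Pow_insert) auto
  also have "\<dots> = (\<Sum>S\<in>Pow ({..<n} - {t}). (c S + x t * c (insert t S)) * (\<Prod>i\<in>S. x i))"
  proof (intro sum.cong refl)
    fix S assume "S \<in> Pow ({..<n} - {t})"
    then have "finite S" "t \<notin> S"
      by (auto intro: finite_subset)
    then show "c S * (\<Prod>i\<in>S. x i) + c (insert t S) * (\<Prod>i\<in>insert t S. x i) =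
        (c S + x t * c (insert t S)) * (\<Prod>i\<in>S. x i)"
      by (simp add: algebra_simps)
  qed
  finally show ?thesis .
qed

lemma ml_eval_zero_outside:
  assumes "T \<subseteq> {..<n}"
  shows "ml_eval n c (\<lambda>j. if j \<in> T then x j else 0) = (\<Sum>W\<in>Pow T. c W * (\<Prod>i\<in>W. x i))"
proof -
  have "ml_eval n c (\<lambda>j. if j \<in> T then x j else 0) =
      (\<Sum>W\<in>Pow T. c W * (\<Prod>i\<in>W. if i \<in> T then x i else 0))"
    unfolding ml_eval_def
  proof (rule sum.mono_neutral_right)
    show "\<forall>W\<in>Pow {..<n} - Pow T. c W * (\<Prod>i\<in>W. if i \<in> T then x i else 0) = 0"
      by (auto intro: finite_subset intro!: prod_zero)
  qed (use assms in auto)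
  also have "\<dots> = (\<Sum>W\<in>Pow T. c W * (\<Prod>i\<in>W. x i))"
    by (intro sum.cong refl arg_cong2[where f = "(*)"] prod.cong) auto
  finally show ?thesis .
qed

lemma ml_coeff_eq_0_if_vanishes_on_cube:
  assumes "ml_poly n c" and "\<And>xs. length xs = n \<Longrightarrow> ml_eval n c (\<lambda>i. bool01 (xs ! i)) = 0"
  shows "c S = 0"
proof (cases "S \<subseteq> {..<n}")
  case False
  then show ?thesis
    using assms(1) by (auto simp: ml_poly_def)
next
  case True
  then show ?thesis
  proof (induction "card S" arbitrary: S rule: less_induct)
    case less
    have "finite S"
      using less.prems finite_subset by blast
    \<comment> \<open>At the indicator vector of S only the monomials of subsets of S survive.\<close>
    have "0 = ml_eval n c (\<lambda>i. bool01 (map (\<lambda>i. i \<in> S) [0..<n] ! i))"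
      using assms(2) by simp
    also have "\<dots> = ml_eval n c (\<lambda>i. if i \<in> S then 1 else 0)"
      by (rule ml_eval_cong) (simp add: bool01_def)
    also have "\<dots> = (\<Sum>U\<in>Pow {..<n}. if U \<subseteq> S then c U else 0)"
      unfolding ml_eval_def
    proof (intro sum.cong refl)
      fix U assume "U \<in> Pow {..<n}"
      then have "finite U"
        by (auto intro: finite_subset)
      then have "(\<Prod>i\<in>U. if i \<in> S then 1 else 0 :: rat) = (if U \<subseteq> S then 1 else 0)"
        by (auto intro!: prod.neutral prod_zero)
      then show "c U * (\<Prod>i\<in>U. if i \<in> S then 1 else 0) = (if U \<subseteq> S then c U else 0)"
        by simp
    qed
    also have "\<dots> = (\<Sum>U\<in>Pow S. c U)"
      using less.prems by (subst sum.If_cases) (auto intro!: sum.cong)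
    also have "\<dots> = c S + (\<Sum>U\<in>Pow S - {S}. c U)"
      using \<open>finite S\<close> by (subst sum.remove[of _ S]) auto
    also have "(\<Sum>U\<in>Pow S - {S}. c U) = 0"
      using less \<open>finite S\<close> by (intro sum.neutral) (auto intro: psubset_card_mono)
    finally show ?case
      by simp
  qed
qed

lemma ml_poly_eq_if_agree_on_cube:
  assumes "ml_poly n c" "ml_poly n d"
    and "\<And>xs. length xs = n \<Longrightarrow>
      ml_eval n c (\<lambda>i. bool01 (xs ! i)) = ml_eval n d (\<lambda>i. bool01 (xs ! i))"
  shows "c = d"
proof
  fix S
  have "ml_poly n (\<lambda>S. c S - d S)"
    using assms(1,2) unfolding ml_poly_def by (metis diff_self)
  then have "c S - d S = 0"
    by (rule ml_coeff_eq_0_if_vanishes_on_cube) (simp add: ml_eval_diff assms(3))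
  then show "c S = d S"
    by simp
qed

lemma ml_poly_extend_affine:
  assumes "ml_poly n c0" "ml_poly n c1"
  obtains c where "ml_poly (Suc n) c"
    "\<And>x. ml_eval (Suc n) c x = ml_eval n c0 x + x n * (ml_eval n c1 x - ml_eval n c0 x)"
proof
  define c where "c S = (if n \<in> S then c1 (S - {n}) - c0 (S - {n}) else c0 S)" for S
  show "ml_poly (Suc n) c"
    unfolding ml_poly_def
  proof (intro allI impI)
    fix S assume "c S \<noteq> 0"
    then have "c0 S \<noteq> 0 \<or> c0 (S - {n}) \<noteq> 0 \<or> c1 (S - {n}) \<noteq> 0"
      by (auto simp: c_def split: if_splits)
    then have "S - {n} \<subseteq> {..<n}"
      using assms unfolding ml_poly_def by blast
    then show "S \<subseteq> {..<Suc n}"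
      by auto
  qed
  fix x
  have "ml_eval (Suc n) c x = (\<Sum>S\<in>Pow {..<n}. (c S + x n * c (insert n S)) * (\<Prod>i\<in>S. x i))"
    using ml_eval_split_var[of n "Suc n" c x] by (simp add: lessThan_Suc)
  also have "\<dots> = (\<Sum>S\<in>Pow {..<n}. (c0 S + x n * (c1 S - c0 S)) * (\<Prod>i\<in>S. x i))"
    by (intro sum.cong refl) (auto simp: c_def insert_Diff_if)
  finally show "ml_eval (Suc n) c x = ml_eval n c0 x + x n * (ml_eval n c1 x - ml_eval n c0 x)"
    by (simp add: ml_eval_def ring_distribs sum.distrib sum_distrib_left sum_subtractf mult.assoc)
qed

lemma ml_poly_interpolation:
  "\<exists>c. ml_poly n c \<and>
     (\<forall>xs. length xs = n \<longrightarrow> ml_eval n c (\<lambda>i. bool01 (xs ! i)) = bool01 (g xs))"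
proof (induction n arbitrary: g)
  case 0
  show ?case
    by (rule exI[where x = "\<lambda>S. if S = {} then bool01 (g []) else 0"])
       (auto simp: ml_poly_def ml_eval_def)
next
  case (Suc n)
  obtain c0 c1 where "ml_poly n c0" "ml_poly n c1"
    and c0: "\<And>xs. length xs = n \<Longrightarrow> ml_eval n c0 (\<lambda>i. bool01 (xs ! i)) = bool01 (g (xs @ [False]))"
    and c1: "\<And>xs. length xs = n \<Longrightarrow> ml_eval n c1 (\<lambda>i. bool01 (xs ! i)) = bool01 (g (xs @ [True]))"
    using Suc.IH[of "\<lambda>xs. g (xs @ [False])"] Suc.IH[of "\<lambda>xs. g (xs @ [True])"] by blast
  obtain c where "ml_poly (Suc n) c"
    and eval: "\<And>x. ml_eval (Suc n) c x = ml_eval n c0 x + x n * (ml_eval n c1 x - ml_eval n c0 x)"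
    using ml_poly_extend_affine[OF \<open>ml_poly n c0\<close> \<open>ml_poly n c1\<close>] by blast
  have cube: "ml_eval n c0 (\<lambda>i. bool01 ((ys @ [b]) ! i)) = bool01 (g (ys @ [False]))"
    "ml_eval n c1 (\<lambda>i. bool01 ((ys @ [b]) ! i)) = bool01 (g (ys @ [True]))"
    if "length ys = n" for ys b
    using that c0[OF that] c1[OF that] by (auto simp: nth_append cong: ml_eval_cong)
  show ?case
  proof (intro exI conjI allI impI)
    fix xs :: "bool list"
    assume "length xs = Suc n"
    then obtain ys b where "xs = ys @ [b]" "length ys = n"
      by (metis length_Suc_conv_rev)
    moreover have "(ys @ [b]) ! n = b"
      using \<open>length ys = n\<close> by auto
    ultimately show "ml_eval (Suc n) c (\<lambda>i. bool01 (xs ! i)) = bool01 (g xs)"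
      by (cases b) (simp_all add: eval cube)
  qed fact
qed

lemma
  shows ml_poly_char_poly: "ml_poly n (char_poly n g)"
    and ml_eval_char_poly:
      "length xs = n \<Longrightarrow> ml_eval n (char_poly n g) (\<lambda>i. bool01 (xs ! i)) = bool01 (g xs)"
proof -
  have "\<exists>!c. ml_poly n c \<and>
      (\<forall>xs. length xs = n \<longrightarrow> ml_eval n c (\<lambda>i. bool01 (xs ! i)) = bool01 (g xs))"
  proof (rule ex_ex1I)
    fix c d
    assume "ml_poly n c \<and> (\<forall>xs. length xs = n \<longrightarrow> ml_eval n c (\<lambda>i. bool01 (xs ! i)) = bool01 (g xs))"
      and "ml_poly n d \<and> (\<forall>xs. length xs = n \<longrightarrow> ml_eval n d (\<lambda>i. bool01 (xs ! i)) = bool01 (g xs))"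
    then show "c = d"
      by (intro ml_poly_eq_if_agree_on_cube[where n = n]) auto
  qed (rule ml_poly_interpolation)
  from theI'[OF this] show "ml_poly n (char_poly n g)"
    and "length xs = n \<Longrightarrow> ml_eval n (char_poly n g) (\<lambda>i. bool01 (xs ! i)) = bool01 (g xs)"
    unfolding char_poly_def by auto
qed

lemma char_poly_eqI:
  assumes "ml_poly n c"
    and "\<And>xs. length xs = n \<Longrightarrow> ml_eval n c (\<lambda>i. bool01 (xs ! i)) = bool01 (g xs)"
  shows "char_poly n g = c"
  by (rule ml_poly_eq_if_agree_on_cube[OF ml_poly_char_poly assms(1)]) (simp add: ml_eval_char_poly assms(2))

lemma ml_poly_degrees_bounded: "ml_poly n c \<Longrightarrow> {card S | S. c S \<noteq> 0} \<subseteq> {..n}"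
  unfolding ml_poly_def by (auto dest!: card_mono[OF finite_lessThan])

lemma card_le_ml_deg:
  assumes "ml_poly n c" "c S \<noteq> 0"
  shows "card S \<le> ml_deg c"
  unfolding ml_deg_def
  using assms finite_subset[OF ml_poly_degrees_bounded[OF assms(1)]] by (auto intro!: Max_ge)

lemma ml_deg_attained:
  assumes "ml_poly n c" "0 < ml_deg c"
  obtains S where "c S \<noteq> 0" "card S = ml_deg c"
proof -
  have "finite (insert 0 {card S | S. c S \<noteq> 0})"
    using finite_subset[OF ml_poly_degrees_bounded[OF assms(1)]] by simp
  then have "ml_deg c \<in> insert 0 {card S | S. c S \<noteq> 0}"
    unfolding ml_deg_def by (rule Max_in) simp
  then show ?thesis
    using assms(2) that by auto
qed

subsection \<open>Fixing variables and arguments\<close>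

lemma ml_poly_subst_var:
  assumes "ml_poly n c" "t < n"
  obtains c' where "ml_poly n c'" "\<And>x. ml_eval n c' x = ml_eval n c (x(t := v))"
proof
  define c' where "c' S = (if t \<in> S then 0 else c S + v * c (insert t S))" for S
  show "ml_poly n c'"
    using assms(1) unfolding ml_poly_def c'_def by (metis insert_subset mult_zero_right add_0)
  show "ml_eval n c' x = ml_eval n c (x(t := v))" for x
    unfolding ml_eval_split_var[OF assms(2)]
  proof (intro sum.cong refl)
    fix S assume "S \<in> Pow ({..<n} - {t})"
    then have "t \<notin> S"
      by auto
    then show "(c' S + x t * c' (insert t S)) * (\<Prod>i\<in>S. x i) =
        (c S + (x(t := v)) t * c (insert t S)) * (\<Prod>i\<in>S. (x(t := v)) i)"
      by (simp add: c'_def prod_fun_upd_notin fun_upd_same del: fun_upd_apply)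
  qed
qed

definition fix_vars :: "(nat \<Rightarrow> bool option) \<Rightarrow> (nat \<Rightarrow> rat) \<Rightarrow> nat \<Rightarrow> rat" where
  "fix_vars \<rho> x = (\<lambda>j. case \<rho> j of None \<Rightarrow> x j | Some b \<Rightarrow> bool01 b)"

definition fix_args :: "nat \<Rightarrow> (bool list \<Rightarrow> bool) \<Rightarrow> (nat \<Rightarrow> bool option) \<Rightarrow> bool list \<Rightarrow> bool" where
  "fix_args k f \<rho> xs = f (map (\<lambda>j. case \<rho> j of None \<Rightarrow> xs ! j | Some b \<Rightarrow> b) [0..<k])"

lemma ml_poly_fix_vars:
  assumes "ml_poly n c"
  obtains c' where "ml_poly n c'" "\<And>x. ml_eval n c' x = ml_eval n c (fix_vars \<rho> x)"
proof -
  have "\<exists>c'. ml_poly n c' \<and>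
      (\<forall>x. ml_eval n c' x = ml_eval n c (fix_vars (\<lambda>j. if j < m then \<rho> j else None) x))"
    if "m \<le> n" for m
    using that
  proof (induction m)
    case 0
    then show ?case
      using assms by (auto simp: fix_vars_def)
  next
    case (Suc m)
    then obtain c' where "ml_poly n c'"
      and c': "\<And>x. ml_eval n c' x = ml_eval n c (fix_vars (\<lambda>j. if j < m then \<rho> j else None) x)"
      by auto
    show ?case
    proof (cases "\<rho> m")
      case None
      then have "(\<lambda>j. if j < Suc m then \<rho> j else None) = (\<lambda>j. if j < m then \<rho> j else None)"
        by (auto simp: less_Suc_eq)
      then show ?thesis
        using \<open>ml_poly n c'\<close> c' by auto
    next
      case (Some b)
      then have "fix_vars (\<lambda>j. if j < Suc m then \<rho> j else None) x =
          fix_vars (\<lambda>j. if j < m then \<rho> j else None) (x(m := bool01 b))" for x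
        by (auto simp: fix_vars_def fun_eq_iff less_Suc_eq split: option.split)
      moreover obtain c'' where "ml_poly n c''"
        "\<And>x. ml_eval n c'' x = ml_eval n c' (x(m := bool01 b))"
        using ml_poly_subst_var[OF \<open>ml_poly n c'\<close>] Suc.prems by (metis Suc_le_lessD)
      ultimately show ?thesis
        using c' by auto
    qed
  qed
  then obtain c' where "ml_poly n c'"
    and "\<And>x. ml_eval n c' x = ml_eval n c (fix_vars (\<lambda>j. if j < n then \<rho> j else None) x)"
    by blast
  moreover have "ml_eval n c (fix_vars (\<lambda>j. if j < n then \<rho> j else None) x) =
      ml_eval n c (fix_vars \<rho> x)" for x
    by (rule ml_eval_cong) (simp add: fix_vars_def)
  ultimately show ?thesis
    using that by auto
qed

lemma expressible_fix_args: "expressible k (fix_args k f \<rho>) k f"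
  unfolding expressible_def
  by (rule exI[where x = "\<lambda>j. case \<rho> j of None \<Rightarrow> Inl j | Some b \<Rightarrow> Inr b"])
     (auto simp: fix_args_def split: option.splits intro!: map_cong arg_cong[where f = f])

lemma char_poly_fix_args:
  "ml_eval k (char_poly k (fix_args k f \<rho>)) x = ml_eval k (char_poly k f) (fix_vars \<rho> x)"
proof -
  obtain c where "ml_poly k c"
    and c: "\<And>x. ml_eval k c x = ml_eval k (char_poly k f) (fix_vars \<rho> x)"
    using ml_poly_fix_vars[OF ml_poly_char_poly[of k f]] by blast
  have "char_poly k (fix_args k f \<rho>) = c"
  proof (rule char_poly_eqI[OF \<open>ml_poly k c\<close>])
    fix xs :: "bool list"
    assume "length xs = k"
    let ?ys = "map (\<lambda>j. case \<rho> j of None \<Rightarrow> xs ! j | Some b \<Rightarrow> b) [0..<k]"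
    have "ml_eval k c (\<lambda>i. bool01 (xs ! i)) = ml_eval k (char_poly k f) (\<lambda>i. bool01 (?ys ! i))"
      unfolding c by (rule ml_eval_cong) (simp add: fix_vars_def split: option.split)
    also have "\<dots> = bool01 (fix_args k f \<rho> xs)"
      by (simp add: ml_eval_char_poly fix_args_def)
    finally show "ml_eval k c (\<lambda>i. bool01 (xs ! i)) = bool01 (fix_args k f \<rho> xs)" .
  qed
  then show ?thesis
    using c by simp
qed

subsection \<open>Finite differences\<close>

text \<open>The iterated difference operator of the variables in D, i.e. the product over t in D of
  the operators that replace x_t by 1 minus x_t by 0: the discrete analogue of the
  partial derivative with respect to these variables.\<close>

definition finite_diff :: "nat set \<Rightarrow> ((nat \<Rightarrow> rat) \<Rightarrow> rat) \<Rightarrow> (nat \<Rightarrow> rat) \<Rightarrow> rat" where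
  "finite_diff D \<Phi> x =
     (\<Sum>U\<in>Pow D. (-1) ^ card (D - U) * \<Phi> (\<lambda>j. if j \<in> D then bool01 (j \<in> U) else x j))"

lemma finite_diff_empty [simp]: "finite_diff {} \<Phi> x = \<Phi> x"
  by (simp add: finite_diff_def)

lemma finite_diff_insert:
  assumes "finite D" "t \<notin> D"
  shows "finite_diff (insert t D) \<Phi> x = finite_diff D \<Phi> (x(t := 1)) - finite_diff D \<Phi> (x(t := 0))"
proof -
  let ?at = "\<lambda>U y. \<lambda>j. if j \<in> D then bool01 (j \<in> U) else y j"
  have "finite_diff (insert t D) \<Phi> x =
      (\<Sum>U\<in>Pow D. (-1) ^ card (insert t D - U) * \<Phi> (?at U (x(t := 0))) +
        (-1) ^ card (insert t D - insert t U) * \<Phi> (?at U (x(t := 1))))"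
    unfolding finite_diff_def sum_Pow_insert[OF assms]
    using assms(2) by (intro sum.cong refl arg_cong2[where f = "(+)"] arg_cong2[where f = "(*)"]
        arg_cong[where f = \<Phi>]) (auto simp: fun_eq_iff bool01_def)
  also have "\<dots> = (\<Sum>U\<in>Pow D. (-1) ^ card (D - U) * \<Phi> (?at U (x(t := 1))) -
      (-1) ^ card (D - U) * \<Phi> (?at U (x(t := 0))))"
  proof (intro sum.cong refl)
    fix U assume "U \<in> Pow D"
    then have "insert t D - U = insert t (D - U)" "t \<notin> D - U" "insert t D - insert t U = D - U"
      using assms(2) by auto
    then show "(-1) ^ card (insert t D - U) * \<Phi> (?at U (x(t := 0))) +
        (-1) ^ card (insert t D - insert t U) * \<Phi> (?at U (x(t := 1))) =
        (-1) ^ card (D - U) * \<Phi> (?at U (x(t := 1))) - (-1) ^ card (D - U) * \<Phi> (?at U (x(t := 0)))"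
      using assms(1) by simp
  qed
  also have "\<dots> = finite_diff D \<Phi> (x(t := 1)) - finite_diff D \<Phi> (x(t := 0))"
    by (simp add: finite_diff_def sum_subtractf)
  finally show ?thesis .
qed

lemma finite_diff_monomial_sum:
  assumes "finite A" "D \<subseteq> A"
  shows "finite_diff D (\<lambda>y. \<Sum>W\<in>Pow A. e W * (\<Prod>i\<in>W. y i)) x =
    (\<Sum>W\<in>Pow (A - D). e (W \<union> D) * (\<Prod>i\<in>W. x i))"
proof -
  have "finite D"
    using assms finite_subset by blast
  then show ?thesis
    using assms(2)
  proof (induction D arbitrary: x rule: finite_induct)
    case empty
    then show ?case
      by simp
  next
    case (insert t D)
    have "t \<in> A - D" "finite (A - D - {t})" "t \<notin> A - D - {t}"
      using insert assms(1) by auto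
    have "finite_diff (insert t D) (\<lambda>y. \<Sum>W\<in>Pow A. e W * (\<Prod>i\<in>W. y i)) x =
        (\<Sum>W\<in>Pow (A - D). e (W \<union> D) * ((\<Prod>i\<in>W. (x(t := 1)) i) - (\<Prod>i\<in>W. (x(t := 0)) i)))"
      using insert by (simp add: finite_diff_insert sum_subtractf right_diff_distrib)
    also have "\<dots> = (\<Sum>W\<in>Pow (insert t (A - D - {t})).
        e (W \<union> D) * ((\<Prod>i\<in>W. (x(t := 1)) i) - (\<Prod>i\<in>W. (x(t := 0)) i)))"
      using \<open>t \<in> A - D\<close> by (simp add: insert_absorb)
    also have "\<dots> = (\<Sum>W\<in>Pow (A - insert t D). e (W \<union> insert t D) * (\<Prod>i\<in>W. x i))"
      unfolding sum_Pow_insert[OF \<open>finite (A - D - {t})\<close> \<open>t \<notin> A - D - {t}\<close>]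
    proof (intro sum.cong)
      fix W assume "W \<in> Pow (A - insert t D)"
      then have "finite W" "t \<notin> W"
        using assms(1) by (auto intro: finite_subset)
      then show "e (W \<union> D) * ((\<Prod>i\<in>W. (x(t := 1)) i) - (\<Prod>i\<in>W. (x(t := 0)) i)) +
          e (insert t W \<union> D) * ((\<Prod>i\<in>insert t W. (x(t := 1)) i) - (\<Prod>i\<in>insert t W. (x(t := 0)) i)) =
          e (W \<union> insert t D) * (\<Prod>i\<in>W. x i)"
        by (simp add: prod_fun_upd_notin fun_upd_same del: fun_upd_apply)
    qed auto
    finally show ?case .
  qed
qed

subsection \<open>The span of the expressible characteristic polynomials\<close>

definition expr_span :: "nat \<Rightarrow> (bool list \<Rightarrow> bool) \<Rightarrow> nat \<Rightarrow> ((nat \<Rightarrow> rat) \<Rightarrow> rat) \<Rightarrow> bool" where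
  "expr_span k f l \<Phi> \<longleftrightarrow> (\<exists>fs :: (nat \<times> (bool list \<Rightarrow> bool) \<times> nat list \<times> rat) list.
     (\<forall>(a, g, js, \<alpha>) \<in> set fs. expressible a g k f \<and> length js = a \<and> (\<forall>j\<in>set js. j < l)) \<and>
     (\<forall>x. \<Phi> x = (\<Sum>(a, g, js, \<alpha>) \<leftarrow> fs. \<alpha> * ml_eval a (char_poly a g) (\<lambda>t. x (js ! t)))))"

lemma expr_span_zero: "expr_span k f l (\<lambda>x. 0)"
  unfolding expr_span_def by (rule exI[where x = "[]"]) simp

lemma expr_span_add:
  assumes "expr_span k f l \<Phi>" "expr_span k f l \<Psi>"
  shows "expr_span k f l (\<lambda>x. \<Phi> x + \<Psi> x)"
proof -
  obtain fs where fs: "\<forall>(a, g, js, \<alpha>) \<in> set fs. expressible a g k f \<and> length js = a \<and> (\<forall>j\<in>set js. j < l)"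
    and \<Phi>: "\<forall>x. \<Phi> x = (\<Sum>(a, g, js, \<alpha>) \<leftarrow> fs. \<alpha> * ml_eval a (char_poly a g) (\<lambda>t. x (js ! t)))"
    using assms(1) unfolding expr_span_def by blast
  obtain gs where gs: "\<forall>(a, g, js, \<alpha>) \<in> set gs. expressible a g k f \<and> length js = a \<and> (\<forall>j\<in>set js. j < l)"
    and \<Psi>: "\<forall>x. \<Psi> x = (\<Sum>(a, g, js, \<alpha>) \<leftarrow> gs. \<alpha> * ml_eval a (char_poly a g) (\<lambda>t. x (js ! t)))"
    using assms(2) unfolding expr_span_def by blast
  show ?thesis
    unfolding expr_span_def
  proof (intro exI[where x = "fs @ gs"] conjI)
    show "\<forall>(a, g, js, \<alpha>) \<in> set (fs @ gs). expressible a g k f \<and> length js = a \<and> (\<forall>j\<in>set js. j < l)"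
      using fs gs by (simp only: set_append ball_Un)
  qed (simp add: \<Phi> \<Psi>)
qed

lemma expr_span_scale:
  assumes "expr_span k f l \<Phi>"
  shows "expr_span k f l (\<lambda>x. r * \<Phi> x)"
proof -
  obtain fs where fs: "\<forall>(a, g, js, \<alpha>) \<in> set fs. expressible a g k f \<and> length js = a \<and> (\<forall>j\<in>set js. j < l)"
    and \<Phi>: "\<forall>x. \<Phi> x = (\<Sum>(a, g, js, \<alpha>) \<leftarrow> fs. \<alpha> * ml_eval a (char_poly a g) (\<lambda>t. x (js ! t)))"
    using assms unfolding expr_span_def by blast
  let ?rfs = "map (\<lambda>(a, g, js, \<alpha>). (a, g, js, r * \<alpha>)) fs"
  show ?thesis
    unfolding expr_span_def
  proof (intro exI[where x = ?rfs] conjI allI)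
    show "\<forall>(a, g, js, \<alpha>) \<in> set ?rfs. expressible a g k f \<and> length js = a \<and> (\<forall>j\<in>set js. j < l)"
      using fs by auto
    fix x :: "nat \<Rightarrow> rat"
    have "(\<Sum>(a, g, js, \<alpha>) \<leftarrow> ?rfs. \<alpha> * ml_eval a (char_poly a g) (\<lambda>t. x (js ! t))) =
        r * (\<Sum>(a, g, js, \<alpha>) \<leftarrow> fs. \<alpha> * ml_eval a (char_poly a g) (\<lambda>t. x (js ! t)))"
      by (induction fs) (auto simp: algebra_simps)
    then show "r * \<Phi> x = (\<Sum>(a, g, js, \<alpha>) \<leftarrow> ?rfs. \<alpha> * ml_eval a (char_poly a g) (\<lambda>t. x (js ! t)))"
      by (simp add: \<Phi>)
  qed
qed

lemma expr_span_sum: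
  "finite I \<Longrightarrow> (\<And>i. i \<in> I \<Longrightarrow> expr_span k f l (F i)) \<Longrightarrow> expr_span k f l (\<lambda>x. \<Sum>i\<in>I. F i x)"
  by (induction I rule: finite_induct) (auto intro: expr_span_zero expr_span_add)

lemma expr_span_const:
  assumes "nontrivial k f"
  shows "expr_span k f l (\<lambda>x. 1)"
proof -
  obtain ys where "length ys = k" "f ys"
    using assms unfolding nontrivial_def by blast
  then have "expressible 0 (\<lambda>_. True) k f"
    unfolding expressible_def by (intro exI[where x = "\<lambda>j. Inr (ys ! j)"]) (simp flip: \<open>length ys = k\<close> add: map_nth)
  moreover have "ml_eval 0 (char_poly 0 (\<lambda>_. True)) x = 1" for x
    using ml_eval_char_poly[of "[]" 0 "\<lambda>_. True"] by (simp add: ml_eval_def)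
  ultimately show ?thesis
    unfolding expr_span_def by (intro exI[where x = "[(0, \<lambda>_. True, [], 1)]"]) simp
qed

lemma expr_span_fix_vars:
  assumes "\<And>j. j < k \<Longrightarrow> \<pi> j < l"
  shows "expr_span k f l (\<lambda>x. ml_eval k (char_poly k f) (fix_vars \<rho> (\<lambda>j. x (\<pi> j))))"
  unfolding expr_span_def
proof (intro exI[where x = "[(k, fix_args k f \<rho>, map \<pi> [0..<k], 1)]"] conjI allI)
  fix x :: "nat \<Rightarrow> rat"
  have "ml_eval k (char_poly k f) (fix_vars \<rho> (\<lambda>j. x (\<pi> j))) =
      ml_eval k (char_poly k (fix_args k f \<rho>)) (\<lambda>t. x (map \<pi> [0..<k] ! t))"
    unfolding char_poly_fix_args by (rule ml_eval_cong) (simp add: fix_vars_def split: option.split)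
  then show "ml_eval k (char_poly k f) (fix_vars \<rho> (\<lambda>j. x (\<pi> j))) =
      (\<Sum>(a, g, js, \<alpha>) \<leftarrow> [(k, fix_args k f \<rho>, map \<pi> [0..<k], 1)].
        \<alpha> * ml_eval a (char_poly a g) (\<lambda>t. x (js ! t)))"
    by simp
qed (use assms expressible_fix_args in auto)

lemma expr_span_coeff_extraction:
  assumes "T' \<subseteq> T" "T \<subseteq> {..<k}" "\<And>j. j < k \<Longrightarrow> \<pi> j < l"
  shows "expr_span k f l (\<lambda>x. \<Sum>W\<in>Pow T'. char_poly k f (W \<union> (T - T')) * (\<Prod>j\<in>W. x (\<pi> j)))"
proof -
  define \<Psi> where "\<Psi> y = ml_eval k (char_poly k f) (\<lambda>j. if j \<in> T then y j else 0)" for y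
  have "\<Psi> = (\<lambda>y. \<Sum>W\<in>Pow T. char_poly k f W * (\<Prod>i\<in>W. y i))"
    using assms(2) by (simp add: fun_eq_iff \<Psi>_def ml_eval_zero_outside)
  moreover have "finite T"
    using assms(2) finite_subset by blast
  ultimately have "finite_diff (T - T') \<Psi> y =
      (\<Sum>W\<in>Pow T'. char_poly k f (W \<union> (T - T')) * (\<Prod>i\<in>W. y i))" for y
    using finite_diff_monomial_sum[of T "T - T'"] assms(1) by (simp add: double_diff)
  moreover have "expr_span k f l (\<lambda>x. finite_diff (T - T') \<Psi> (\<lambda>j. x (\<pi> j)))"
    unfolding finite_diff_def
  proof (intro expr_span_sum expr_span_scale)
    fix U assume "U \<in> Pow (T - T')"
    define \<rho> where "\<rho> j = (if j \<in> T - T' then Some (j \<in> U) else if j \<in> T then None else Some False)" for j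
    have "\<Psi> (\<lambda>j. if j \<in> T - T' then bool01 (j \<in> U) else x (\<pi> j)) =
        ml_eval k (char_poly k f) (fix_vars \<rho> (\<lambda>j. x (\<pi> j)))" for x
      unfolding \<Psi>_def fix_vars_def \<rho>_def by (intro arg_cong[where f = "ml_eval k _"]) auto
    then show "expr_span k f l (\<lambda>x. \<Psi> (\<lambda>j. if j \<in> T - T' then bool01 (j \<in> U) else x (\<pi> j)))"
      using expr_span_fix_vars[OF assms(3)] by simp
  qed (use \<open>finite T\<close> in simp)
  ultimately show ?thesis
    by simp
qed

lemma expr_span_coeff_extraction_renamed:
  assumes "T' \<subseteq> T" "T \<subseteq> {..<k}" "bij_betw \<pi> T' S" "\<And>j. \<pi> j < l"
  shows "expr_span k f l
    (\<lambda>x. \<Sum>V\<in>Pow S. char_poly k f (inv_into T' \<pi> ` V \<union> (T - T')) * (\<Prod>i\<in>V. x i))"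
proof -
  let ?a = "\<lambda>V. char_poly k f (inv_into T' \<pi> ` V \<union> (T - T'))"
  have "(\<Sum>W\<in>Pow T'. char_poly k f (W \<union> (T - T')) * (\<Prod>j\<in>W. x (\<pi> j))) =
      (\<Sum>V\<in>Pow S. ?a V * (\<Prod>i\<in>V. x i))" for x
  proof -
    have "(\<Sum>W\<in>Pow T'. char_poly k f (W \<union> (T - T')) * (\<Prod>j\<in>W. x (\<pi> j))) =
        (\<Sum>W\<in>Pow T'. ?a (\<pi> ` W) * (\<Prod>i\<in>\<pi> ` W. x i))"
    proof (intro sum.cong refl)
      fix W assume "W \<in> Pow T'"
      then have "inj_on \<pi> W" "inv_into T' \<pi> ` \<pi> ` W = W"
        using assms(3) by (auto simp: bij_betw_def inv_into_image_cancel intro: inj_on_subset)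
      then show "char_poly k f (W \<union> (T - T')) * (\<Prod>j\<in>W. x (\<pi> j)) = ?a (\<pi> ` W) * (\<Prod>i\<in>\<pi> ` W. x i)"
        by (simp add: prod.reindex)
    qed
    also have "\<dots> = (\<Sum>V\<in>Pow S. ?a V * (\<Prod>i\<in>V. x i))"
      using bij_betw_image_Pow[OF assms(3)] by (rule sum.reindex_bij_betw)
    finally show ?thesis .
  qed
  with expr_span_coeff_extraction[of T' T k \<pi> l f] assms(1,2,4) show ?thesis
    by (simp only:)
qed

lemma expr_span_leading_monomial:
  assumes "S \<noteq> {}" "S \<subseteq> {..<l}" "card S \<le> cdeg k f"
  obtains a where "a S \<noteq> 0" "expr_span k f l (\<lambda>x. \<Sum>V\<in>Pow S. a V * (\<Prod>i\<in>V. x i))"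
proof -
  have "finite S"
    using assms(2) by (meson finite_lessThan finite_subset)
  then have "0 < cdeg k f"
    using assms(1,3) card_gt_0_iff by fastforce
  then obtain T where "char_poly k f T \<noteq> 0" "card T = cdeg k f"
    using ml_deg_attained[OF ml_poly_char_poly] unfolding cdeg_def by metis
  then have "T \<subseteq> {..<k}"
    using ml_poly_char_poly[of k f] unfolding ml_poly_def by blast
  obtain T' where "T' \<subseteq> T" "card T' = card S" "finite T'"
    using obtain_subset_with_card_n[of "card S" T] assms(3) \<open>card T = cdeg k f\<close> by auto
  obtain \<pi> where \<pi>: "bij_betw \<pi> T' S" "\<And>j. \<pi> j \<in> S"
    using finite_same_card_bij_into[OF \<open>finite T'\<close> \<open>finite S\<close> \<open>card T' = card S\<close> assms(1)] by blast
  then have "\<pi> j < l" for j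
    using assms(2) by auto
  with \<open>T' \<subseteq> T\<close> \<open>T \<subseteq> {..<k}\<close> \<pi>(1) have "expr_span k f l
      (\<lambda>x. \<Sum>V\<in>Pow S. char_poly k f (inv_into T' \<pi> ` V \<union> (T - T')) * (\<Prod>i\<in>V. x i))"
    by (rule expr_span_coeff_extraction_renamed)
  moreover have "inv_into T' \<pi> ` S = T'"
    using \<pi>(1) by (metis bij_betw_def inv_into_image_cancel order_refl)
  then have "char_poly k f (inv_into T' \<pi> ` S \<union> (T - T')) \<noteq> 0"
    using \<open>char_poly k f T \<noteq> 0\<close> \<open>T' \<subseteq> T\<close> by (simp add: Un_absorb1)
  ultimately show ?thesis
    using that[of "\<lambda>V. char_poly k f (inv_into T' \<pi> ` V \<union> (T - T'))"] by blast
qed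

lemma expr_span_monomial:
  assumes "nontrivial k f" "S \<subseteq> {..<l}" "card S \<le> cdeg k f"
  shows "expr_span k f l (\<lambda>x. \<Prod>i\<in>S. x i)"
  using assms(2,3)
proof (induction "card S" arbitrary: S rule: less_induct)
  case less
  show ?case
  proof (cases "S = {}")
    case True
    then show ?thesis
      using expr_span_const[OF assms(1)] by simp
  next
    case False
    then obtain a where "a S \<noteq> 0" and full: "expr_span k f l (\<lambda>x. \<Sum>V\<in>Pow S. a V * (\<Prod>i\<in>V. x i))"
      using expr_span_leading_monomial less.prems by blast
    have "finite S"
      using less.prems(1) by (meson finite_lessThan finite_subset)
    have lower: "expr_span k f l (\<lambda>x. \<Sum>V\<in>Pow S - {S}. a V * (\<Prod>i\<in>V. x i))"
    proof (intro expr_span_sum expr_span_scale less.hyps)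
      fix V assume "V \<in> Pow S - {S}"
      then have "V \<subset> S"
        by auto
      then show "card V < card S"
        by (rule psubset_card_mono[OF \<open>finite S\<close>])
      then show "card V \<le> cdeg k f"
        using less.prems(2) by simp
      show "V \<subseteq> {..<l}"
        using \<open>V \<subset> S\<close> less.prems(1) by auto
    qed (simp add: \<open>finite S\<close>)
    have "(\<Sum>V\<in>Pow S. a V * (\<Prod>i\<in>V. x i)) =
        a S * (\<Prod>i\<in>S. x i) + (\<Sum>V\<in>Pow S - {S}. a V * (\<Prod>i\<in>V. x i))" for x
      using \<open>finite S\<close> by (simp add: sum.remove[of _ S])
    with full lower have "expr_span k f l (\<lambda>x. (1 / a S) * ((a S * (\<Prod>i\<in>S. x i) +
        (\<Sum>V\<in>Pow S - {S}. a V * (\<Prod>i\<in>V. x i))) + (-1) * (\<Sum>V\<in>Pow S - {S}. a V * (\<Prod>i\<in>V. x i))))"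
      by (simp only:) (rule expr_span_scale[OF expr_span_add[OF _ expr_span_scale]])
    also have "(\<lambda>x. (1 / a S) * ((a S * (\<Prod>i\<in>S. x i) + (\<Sum>V\<in>Pow S - {S}. a V * (\<Prod>i\<in>V. x i))) +
        (-1) * (\<Sum>V\<in>Pow S - {S}. a V * (\<Prod>i\<in>V. x i)))) = (\<lambda>x. \<Prod>i\<in>S. x i)"
      using \<open>a S \<noteq> 0\<close> by simp
    finally show ?thesis .
  qed
qed

theorem lemma15:
  fixes k :: nat and f :: "bool list \<Rightarrow> bool" and l :: nat and P :: mlpoly
  assumes "nontrivial k f"
    and "ml_poly l P"
    and "ml_deg P \<le> cdeg k f"
  shows "\<exists>fs :: (nat \<times> (bool list \<Rightarrow> bool) \<times> nat list \<times> rat) list.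
           (\<forall>(a, g, js, \<alpha>) \<in> set fs.
               expressible a g k f \<and> length js = a \<and> (\<forall>j\<in>set js. j < l)) \<and>
           (\<forall>x :: nat \<Rightarrow> rat.
               ml_eval l P x =
               (\<Sum>(a, g, js, \<alpha>) \<leftarrow> fs. \<alpha> * ml_eval a (char_poly a g) (\<lambda>t. x (js ! t))))"
proof -
  have "expr_span k f l (ml_eval l P)"
    unfolding ml_eval_def[abs_def]
  proof (rule expr_span_sum)
    fix S assume "S \<in> Pow {..<l}"
    show "expr_span k f l (\<lambda>x. P S * (\<Prod>i\<in>S. x i))"
    proof (cases "P S = 0")
      case True
      then show ?thesis
        using expr_span_zero by simp
    next
      case False
      then have "card S \<le> cdeg k f"
        using card_le_ml_deg[OF assms(2)] assms(3) le_trans by blast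
      then show ?thesis
        using expr_span_monomial[OF assms(1)] \<open>S \<in> Pow {..<l}\<close> by (simp add: expr_span_scale)
    qed
  qed simp
  then show ?thesis
    unfolding expr_span_def .
qed

end
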